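(* Consider a chore division instance satisfying Conditions 1 and 2. For every normalized price vector $p\in P$ and every $k\in[d]$, $\sum_{j\in B_k}p_j>0$.
   Context: Instance: agents $[n]$, chores $[m]$, disutility $d$, endowments $w_{i,j}\ge0$ (amount of chore $j$ owned by agent $i$), threshold $\tau$. The disutility graph $D$ is the bipartite graph with edge $\{i,j\}$ iff $d(i,j)<\tau$. Condition 1: $D$ is a disjoint union of complete bipartite graphs $D_1,\dots,D_d$ (its components), $D_k$ with agent set $A_k$ and chore set $B_k$. The exchange graph is the directed graph $W$ on $[d]$ with arc $(k,k')$ iff for every chore $b\in B_{k'}$ there is an agent $a\in A_k$ with $w_{a,b}>0$. Condition 2: $W$ is strongly connected. A normalized price vector is $p\in\mathbb{R}^m$ with $p_j\ge0$, $\sum_{j}p_j=1$, and $\sum_{i\in A_k}\sum_{j\in[m]}w_{i,j}p_j=\sum_{j\in B_k}p_j$ for every $k\in[d]$; $P$ is the set of such vectors. *)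

theory Defs
  imports Complex_Main
begin

(* Agents are {1..n}, chores are {1..m}, components are indexed by {1..nd}.
   A k / B k are the agent / chore sets of component D_k. *)

definition disutility_edge :: "(nat \<Rightarrow> nat \<Rightarrow> real) \<Rightarrow> real \<Rightarrow> nat \<Rightarrow> nat \<Rightarrow> bool" where
  "disutility_edge dis tau i j \<longleftrightarrow> dis i j < tau"

(* Condition 1: the disutility graph D is the disjoint union of the complete bipartite
   graphs D_1..D_nd, which are its connected components. *)
definition condition1 ::
  "nat \<Rightarrow> nat \<Rightarrow> (nat \<Rightarrow> nat \<Rightarrow> real) \<Rightarrow> real \<Rightarrow> nat \<Rightarrow> (nat \<Rightarrow> nat set) \<Rightarrow> (nat \<Rightarrow> nat set) \<Rightarrow> bool" where
  "condition1 n m dis tau nd A B \<longleftrightarrow>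
     (\<forall>k\<in>{1..nd}. A k \<subseteq> {1..n} \<and> B k \<subseteq> {1..m}) \<and>
     (\<forall>i\<in>{1..n}. \<exists>!k. k \<in> {1..nd} \<and> i \<in> A k) \<and>
     (\<forall>j\<in>{1..m}. \<exists>!k. k \<in> {1..nd} \<and> j \<in> B k) \<and>
     (\<forall>k\<in>{1..nd}. (A k \<noteq> {} \<and> B k \<noteq> {}) \<or> card (A k) + card (B k) = 1) \<and>
     (\<forall>i\<in>{1..n}. \<forall>j\<in>{1..m}.
        disutility_edge dis tau i j \<longleftrightarrow> (\<exists>k\<in>{1..nd}. i \<in> A k \<and> j \<in> B k))"

definition exchange_arcs ::
  "nat \<Rightarrow> (nat \<Rightarrow> nat \<Rightarrow> real) \<Rightarrow> (nat \<Rightarrow> nat set) \<Rightarrow> (nat \<Rightarrow> nat set) \<Rightarrow> (nat \<times> nat) set" where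
  "exchange_arcs nd w A B =
     {(k, k'). k \<in> {1..nd} \<and> k' \<in> {1..nd} \<and> (\<forall>b\<in>B k'. \<exists>a\<in>A k. w a b > 0)}"

definition condition2 ::
  "nat \<Rightarrow> (nat \<Rightarrow> nat \<Rightarrow> real) \<Rightarrow> (nat \<Rightarrow> nat set) \<Rightarrow> (nat \<Rightarrow> nat set) \<Rightarrow> bool" where
  "condition2 nd w A B \<longleftrightarrow>
     (\<forall>k\<in>{1..nd}. \<forall>k'\<in>{1..nd}. (k, k') \<in> (exchange_arcs nd w A B)\<^sup>*)"

definition normalized_prices ::
  "nat \<Rightarrow> (nat \<Rightarrow> nat \<Rightarrow> real) \<Rightarrow> nat \<Rightarrow> (nat \<Rightarrow> nat set) \<Rightarrow> (nat \<Rightarrow> nat set) \<Rightarrow> (nat \<Rightarrow> real) set" where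
  "normalized_prices m w nd A B =
     {p. (\<forall>j\<in>{1..m}. p j \<ge> 0) \<and> (\<Sum>j\<in>{1..m}. p j) = 1 \<and>
         (\<forall>k\<in>{1..nd}. (\<Sum>i\<in>A k. \<Sum>j\<in>{1..m}. w i j * p j) = (\<Sum>j\<in>B k. p j))}"

end

theory Submission
  imports Defs
begin

text \<open>The components whose chores carry positive total price are closed under predecessors
  in the exchange graph: an agent of the predecessor owns part of a positively priced chore,
  so its component earns a positive income, which the balance condition turns into a positive
  price of the predecessor's chores. Some component has positive price because the prices sum
  to one, and strong connectivity carries positivity back to every component.\<close>

lemma income_pos_if_endowments_cover_priced_chores:
  fixes w :: "nat \<Rightarrow> nat \<Rightarrow> real" and p :: "nat \<Rightarrow> real"
  assumes w_nonneg: "\<forall>i\<in>{1..n}. \<forall>j\<in>{1..m}. w i j \<ge> 0"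
    and p_nonneg: "\<forall>j\<in>{1..m}. p j \<ge> 0"
    and agents: "I \<subseteq> {1..n}" and chores: "J \<subseteq> {1..m}"
    and cover: "\<forall>c\<in>J. \<exists>i\<in>I. w i c > 0"
    and priced: "(\<Sum>j\<in>J. p j) > 0"
  shows "(\<Sum>i\<in>I. \<Sum>j\<in>{1..m}. w i j * p j) > 0"
proof -
  obtain j where j: "j \<in> J" "p j > 0"
    using priced by (metis not_le sum_nonpos)
  then obtain i where i: "i \<in> I" "w i j > 0"
    using cover by blast
  have j_chore: "j \<in> {1..m}"
    using j chores by blast
  have finite_agents: "finite I"
    using agents finite_subset by blast
  have income_nonneg: "w i' j' * p j' \<ge> 0" if "i' \<in> I" "j' \<in> {1..m}" for i' j'
    using that agents w_nonneg p_nonneg by auto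
  have "0 < w i j * p j"
    using i j by simp
  also have "\<dots> \<le> (\<Sum>j'\<in>{1..m}. w i j' * p j')"
    by (rule member_le_sum) (use j_chore income_nonneg i in auto)
  also have "\<dots> \<le> (\<Sum>i'\<in>I. \<Sum>j'\<in>{1..m}. w i' j' * p j')"
    by (rule member_le_sum) (use i finite_agents income_nonneg in \<open>auto intro: sum_nonneg\<close>)
  finally show ?thesis .
qed

lemma condition1_component_subsets:
  assumes "condition1 n m dis tau nd A B" and "k \<in> {1..nd}"
  shows "A k \<subseteq> {1..n}" and "B k \<subseteq> {1..m}"
  using assms unfolding condition1_def by simp_all

lemma exists_component_price_mass_pos:
  fixes p :: "nat \<Rightarrow> real"
  assumes cond1: "condition1 n m dis tau nd A B"
    and pP: "p \<in> normalized_prices m w nd A B"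
  shows "\<exists>k\<in>{1..nd}. (\<Sum>j\<in>B k. p j) > 0"
proof -
  have p_nonneg: "\<forall>j\<in>{1..m}. p j \<ge> 0" and p_sum: "(\<Sum>j\<in>{1..m}. p j) = 1"
    using pP unfolding normalized_prices_def by auto
  have chores_covered: "\<forall>j\<in>{1..m}. \<exists>!k. k \<in> {1..nd} \<and> j \<in> B k"
    using cond1 unfolding condition1_def by (elim conjE)
  have "\<not> (\<forall>j\<in>{1..m}. p j \<le> 0)"
  proof
    assume "\<forall>j\<in>{1..m}. p j \<le> 0"
    then have "(\<Sum>j\<in>{1..m}. p j) \<le> 0"
      by (intro sum_nonpos) blast
    then show False
      using p_sum by simp
  qed
  then obtain j where j: "j \<in> {1..m}" "p j > 0"
    by (auto simp: not_le)
  then obtain k where k: "k \<in> {1..nd}" "j \<in> B k"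
    using chores_covered by (meson ex1_implies_ex)
  have "B k \<subseteq> {1..m}"
    using condition1_component_subsets(2)[OF cond1 k(1)] .
  then have "p j \<le> (\<Sum>j'\<in>B k. p j')"
    using k(2) p_nonneg by (intro member_le_sum) (auto intro: finite_subset)
  then show ?thesis
    using k(1) j(2) by (meson less_le_trans)
qed

lemma price_mass_pos_along_exchange_arc:
  fixes p :: "nat \<Rightarrow> real"
  assumes endow_nonneg: "\<forall>i\<in>{1..n}. \<forall>j\<in>{1..m}. w i j \<ge> 0"
    and cond1: "condition1 n m dis tau nd A B"
    and pP: "p \<in> normalized_prices m w nd A B"
    and arc: "(a, b) \<in> exchange_arcs nd w A B"
    and priced: "(\<Sum>j\<in>B b. p j) > 0"
  shows "(\<Sum>j\<in>B a. p j) > 0"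
proof -
  have a: "a \<in> {1..nd}" and b: "b \<in> {1..nd}" and cover: "\<forall>c\<in>B b. \<exists>i\<in>A a. w i c > 0"
    using arc unfolding exchange_arcs_def by auto
  have p_nonneg: "\<forall>j\<in>{1..m}. p j \<ge> 0"
    and balance: "(\<Sum>i\<in>A a. \<Sum>j\<in>{1..m}. w i j * p j) = (\<Sum>j\<in>B a. p j)"
    using pP a unfolding normalized_prices_def by auto
  have "(\<Sum>i\<in>A a. \<Sum>j\<in>{1..m}. w i j * p j) > 0"
    using income_pos_if_endowments_cover_priced_chores[OF endow_nonneg p_nonneg
        condition1_component_subsets(1)[OF cond1 a]
        condition1_component_subsets(2)[OF cond1 b] cover priced] .
  then show ?thesis
    using balance by simp
qed

theorem mainTheorem9:
  fixes n m nd :: nat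
    and dis :: "nat \<Rightarrow> nat \<Rightarrow> real"
    and w :: "nat \<Rightarrow> nat \<Rightarrow> real"
    and tau :: real
    and A B :: "nat \<Rightarrow> nat set"
    and p :: "nat \<Rightarrow> real"
    and k :: nat
  assumes endow_nonneg: "\<forall>i\<in>{1..n}. \<forall>j\<in>{1..m}. w i j \<ge> 0"
    and cond1: "condition1 n m dis tau nd A B"
    and cond2: "condition2 nd w A B"
    and pP: "p \<in> normalized_prices m w nd A B"
    and k: "k \<in> {1..nd}"
  shows "(\<Sum>j\<in>B k. p j) > 0"
proof -
  obtain k' where k': "k' \<in> {1..nd}" "(\<Sum>j\<in>B k'. p j) > 0"
    using exists_component_price_mass_pos[OF cond1 pP] by blast
  have "(k, k') \<in> (exchange_arcs nd w A B)\<^sup>*"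
    using cond2 k k'(1) unfolding condition2_def by blast
  then show ?thesis
  proof (induction rule: converse_rtrancl_induct)
    case base
    show ?case using k'(2) .
  next
    case (step a b)
    then show ?case
      using price_mass_pos_along_exchange_arc[OF endow_nonneg cond1 pP] by blast
  qed
qed

end
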